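(* Let $\mathrm U\ge0$, $h_b\in[0,1/2]$ and $k\in\mathbb T^2$. Then each connected component of $\rho(A_{1,1}(\mathrm U,k))\cap\mathbb R$ contains at most one eigenvalue of $A(\mathrm U,k)$.
   Context: Notation: $\mathbb T^2=[-\pi,\pi)^2$ with normalized Haar measure $\nu$; $L^2(\mathbb T^2)=L^2(\mathbb T^2,\nu)$, scalar product antilinear in the first argument. For $f\in\ell^1(\mathbb Z^2)$, $\hat f(k)=\sum_{x}e^{ik\cdot x}f(x)$, $k\in\mathbb R^2$. $\hat{\mathfrak e}_x(p)=e^{ip\cdot x}$; $P_x$ the orthogonal projection onto $\mathbb C\hat{\mathfrak e}_x$; $M_g$ multiplication by $g$; $\cos(q):=\cos q_1+\cos q_2$; $\rho(\cdot)$ denotes the resolvent set. Data: $\epsilon,h_b,\mathrm U\ge0$; $\mathrm u:\mathbb Z^2\to[0,\infty)$, $\upsilon,\mathfrak p_1,\mathfrak p_2:\mathbb Z^2\to\mathbb R$, all invariant under $90^\circ$-rotations, $\mathrm u,\upsilon$ absolutely summable, $\sum_z e^{\alpha_0|z|}|\mathfrak p_j(z)|<\infty$ for some $\alpha_0>0$, $\mathfrak p_2(z)=0$ for $z\notin(2\mathbb Z)^2$, $\mathfrak p_1+\mathfrak p_2\neq0$, and for every $k$ some $x$ with $\mathfrak p_2(x)\neq-e^{ik\cdot x/2}\mathfrak p_1(x)$. For $k,p\in\mathbb T^2$: $\mathfrak b(k)=h_b\epsilon(2-\cos k)$, $\mathfrak f(k)(p)=\epsilon(4-\cos(p+k)-\cos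 p)$, $\mathfrak d(k)(p)=\hat{\mathfrak p}_1(k+p)+\hat{\mathfrak p}_2(k/2+p)$. $A_{1,1}(\mathrm U,k)=M_{\mathfrak f(k)}+\sum_x\mathrm u(x)P_x+\mathrm UP_0$; on $\mathcal H=L^2(\mathbb T^2)\oplus\mathbb C$, $A(\mathrm U,k)(\varphi,z)=\big(A_{1,1}(\mathrm U,k)\varphi+\hat\upsilon(k)z\,\mathfrak d(k),\ \hat\upsilon(k)\langle\mathfrak d(k),\varphi\rangle+\mathfrak b(k)z\big)$. *)

theory Defs
  imports "HOL-Analysis.Analysis"
begin

definition TT :: "(real \<times> real) set" where
  "TT = {-pi..<pi} \<times> {-pi..<pi}"

definition nu :: "(real \<times> real) measure" where
  "nu = uniform_measure lborel TT"

text \<open>Square integrable functions (elements of L^2 are identified up to nu-a.e. equality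
  wherever they are compared below).\<close>
definition L2 :: "(real \<times> real \<Rightarrow> complex) set" where
  "L2 = {f. f \<in> borel_measurable nu \<and> integrable nu (\<lambda>p. (cmod (f p))\<^sup>2)}"

definition ip :: "(real \<times> real \<Rightarrow> complex) \<Rightarrow> (real \<times> real \<Rightarrow> complex) \<Rightarrow> complex" where
  "ip f g = (LINT p|nu. cnj (f p) * g p)"

definition L2norm :: "(real \<times> real \<Rightarrow> complex) \<Rightarrow> real" where
  "L2norm f = sqrt (LINT p|nu. (cmod (f p))\<^sup>2)"

definition dotZ :: "real \<times> real \<Rightarrow> int \<times> int \<Rightarrow> real" where
  "dotZ k x = fst k * real_of_int (fst x) + snd k * real_of_int (snd x)"

definition ehat :: "int \<times> int \<Rightarrow> real \<times> real \<Rightarrow> complex" where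
  "ehat x p = cis (dotZ p x)"

definition fhat :: "(int \<times> int \<Rightarrow> real) \<Rightarrow> real \<times> real \<Rightarrow> complex" where
  "fhat f k = infsum (\<lambda>x. cis (dotZ k x) * complex_of_real (f x)) UNIV"

definition cos2 :: "real \<times> real \<Rightarrow> real" where
  "cos2 q = cos (fst q) + cos (snd q)"

definition bfun :: "real \<Rightarrow> real \<Rightarrow> real \<times> real \<Rightarrow> real" where
  "bfun eps hb k = hb * eps * (2 - cos2 k)"

definition ffun :: "real \<Rightarrow> real \<times> real \<Rightarrow> real \<times> real \<Rightarrow> real" where
  "ffun eps k p = eps * (4 - cos2 (p + k) - cos2 p)"

definition dfun :: "(int \<times> int \<Rightarrow> real) \<Rightarrow> (int \<times> int \<Rightarrow> real) \<Rightarrow> real \<times> real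
    \<Rightarrow> real \<times> real \<Rightarrow> complex" where
  "dfun p1 p2 k p = fhat p1 (k + p) + fhat p2 ((1/2) *\<^sub>R k + p)"

definition rot_inv :: "(int \<times> int \<Rightarrow> real) \<Rightarrow> bool" where
  "rot_inv f \<longleftrightarrow> (\<forall>a b. f (- b, a) = f (a, b))"

definition A11 :: "real \<Rightarrow> real \<Rightarrow> (int \<times> int \<Rightarrow> real) \<Rightarrow> real \<times> real
    \<Rightarrow> (real \<times> real \<Rightarrow> complex) \<Rightarrow> (real \<times> real \<Rightarrow> complex)" where
  "A11 eps U u k \<phi> = (\<lambda>p. complex_of_real (ffun eps k p) * \<phi> p
      + infsum (\<lambda>x. complex_of_real (u x) * ip (ehat x) \<phi> * ehat x p) UNIV
      + complex_of_real U * ip (ehat (0,0)) \<phi> * ehat (0,0) p)"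

definition Aop :: "real \<Rightarrow> real \<Rightarrow> real \<Rightarrow> (int \<times> int \<Rightarrow> real) \<Rightarrow> (int \<times> int \<Rightarrow> real)
    \<Rightarrow> (int \<times> int \<Rightarrow> real) \<Rightarrow> (int \<times> int \<Rightarrow> real) \<Rightarrow> real \<times> real
    \<Rightarrow> (real \<times> real \<Rightarrow> complex) \<times> complex \<Rightarrow> (real \<times> real \<Rightarrow> complex) \<times> complex" where
  "Aop eps hb U u ups p1 p2 k w =
     ((\<lambda>p. A11 eps U u k (fst w) p + fhat ups k * snd w * dfun p1 p2 k p),
      fhat ups k * ip (dfun p1 p2 k) (fst w) + complex_of_real (bfun eps hb k) * snd w)"

definition in_resolvent :: "((real \<times> real \<Rightarrow> complex) \<Rightarrow> (real \<times> real \<Rightarrow> complex))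
    \<Rightarrow> complex \<Rightarrow> bool" where
  "in_resolvent T lam \<longleftrightarrow>
     (\<forall>g\<in>L2. \<exists>\<phi>\<in>L2. AE p in nu. T \<phi> p - lam * \<phi> p = g p) \<and>
     (\<exists>C. \<forall>\<phi>\<in>L2. L2norm \<phi> \<le> C * L2norm (\<lambda>p. T \<phi> p - lam * \<phi> p))"

definition is_eigenvalue_H :: "((real \<times> real \<Rightarrow> complex) \<times> complex \<Rightarrow> (real \<times> real \<Rightarrow> complex) \<times> complex)
    \<Rightarrow> complex \<Rightarrow> bool" where
  "is_eigenvalue_H A lam \<longleftrightarrow>
     (\<exists>\<phi> z. \<phi> \<in> L2 \<and> \<not> ((AE p in nu. \<phi> p = 0) \<and> z = 0) \<and>
        (AE p in nu. fst (A (\<phi>, z)) p = lam * \<phi> p) \<and> snd (A (\<phi>, z)) = lam * z)"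

end

(*
  For real t in the resolvent set of the symmetric operator T = A_{1,1}(U,k), let psi_t solve
  (T - t) psi_t = -v d with v = hat upsilon(k) (real, by rotation invariance) and d = d(k).
  If (phi, z) is an eigenvector of A(U,k) for t, injectivity of T - t forces phi = z psi_t
  and z /= 0, and the scalar equation becomes F(t) = b(k) for F(t) = t - v <psi_t, d>.
  The resolvent identity gives F(t) - F(s) = (t - s) (1 + Re <psi_s, psi_t>), and the
  resolvent bound makes psi continuous, so F' = 1 + ||psi_t||^2 > 0: F is strictly
  increasing on every component of the resolvent set (an interval) and takes the value
  b(k) at most once there.
*)

theory Submission
  imports Defs "HOL-Probability.Probability_Measure"
begin

lemma emeasure_TT: "emeasure lborel TT = ennreal (2 * pi) * ennreal (2 * pi)"
proof -
  have "emeasure lborel TT = emeasure (lborel \<Otimes>\<^sub>M lborel) ({-pi..<pi} \<times> {-pi..<pi::real})"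
    unfolding TT_def lborel_prod ..
  then show ?thesis by (subst (asm) lborel.emeasure_pair_measure_Times) auto
qed

interpretation nu: prob_space nu
  unfolding nu_def using emeasure_TT
  by (intro prob_space_uniform_measure) (auto simp: ennreal_mult_eq_top_iff)

lemma space_nu [simp]: "space nu = UNIV"
  by (simp add: nu_def)

lemma sets_nu [simp]: "sets nu = sets borel"
  by (simp add: nu_def)

lemma measurable_nu_iff [simp]: "f \<in> borel_measurable nu \<longleftrightarrow> f \<in> borel_measurable borel"
  by (simp add: measurable_def)

section \<open>Square integrable functions\<close>

lemma borel_measurable_cnj [measurable (raw)]:
  "f \<in> borel_measurable M \<Longrightarrow> (\<lambda>x. cnj (f x)) \<in> borel_measurable M"
  by (rule borel_measurable_continuous_on[where f=cnj]) (auto intro: continuous_intros)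

lemma L2_iff: "f \<in> L2 \<longleftrightarrow> f \<in> borel_measurable borel \<and> integrable nu (\<lambda>p. (cmod (f p))\<^sup>2)"
  by (simp add: L2_def)

lemma L2_measurable [measurable_dest]: "f \<in> L2 \<Longrightarrow> f \<in> borel_measurable borel"
  by (simp add: L2_iff)

lemma L2_bounded:
  assumes f: "f \<in> borel_measurable borel" and M: "\<And>p. cmod (f p) \<le> M"
  shows "f \<in> L2"
  unfolding L2_iff
proof
  show "integrable nu (\<lambda>p. (cmod (f p))\<^sup>2)"
    by (rule Bochner_Integration.integrable_bound[of nu "\<lambda>p. M\<^sup>2"])
      (use f M in \<open>auto intro!: power_mono\<close>)
qed (fact f)

lemma integrable_cnj_mult_L2:
  assumes f: "f \<in> L2" and g: "g \<in> L2"
  shows "integrable nu (\<lambda>p. cnj (f p) * g p)"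
proof (rule Bochner_Integration.integrable_bound[of nu "\<lambda>p. (cmod (f p))\<^sup>2 + (cmod (g p))\<^sup>2"])
  show "integrable nu (\<lambda>p. (cmod (f p))\<^sup>2 + (cmod (g p))\<^sup>2)"
    using f g by (auto simp: L2_iff)
  show "(\<lambda>p. cnj (f p) * g p) \<in> borel_measurable nu"
    using f g by simp
  have "cmod a * cmod b \<le> (cmod a)\<^sup>2 + (cmod b)\<^sup>2" for a b
    using sum_squares_bound[of "cmod a" "cmod b"] mult_nonneg_nonneg[OF norm_ge_zero norm_ge_zero, of a b]
    by linarith
  then show "AE p in nu. norm (cnj (f p) * g p) \<le> norm ((cmod (f p))\<^sup>2 + (cmod (g p))\<^sup>2)"
    by (simp add: norm_mult)
qed

lemma L2_integrable:
  assumes f: "f \<in> L2"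
  shows "integrable nu f"
proof -
  have "(\<lambda>_. 1) \<in> L2"
    by (rule L2_bounded[where M=1]) auto
  then show ?thesis
    using integrable_cnj_mult_L2[OF _ f, of "\<lambda>_. 1"] by simp
qed

lemma L2_mult_bounded:
  assumes f: "f \<in> L2" and g: "g \<in> borel_measurable borel" and M: "\<And>p. cmod (g p) \<le> M"
  shows "(\<lambda>p. g p * f p) \<in> L2"
  unfolding L2_iff
proof
  show "(\<lambda>p. g p * f p) \<in> borel_measurable borel"
    using f g by simp
  show "integrable nu (\<lambda>p. (cmod (g p * f p))\<^sup>2)"
    by (rule Bochner_Integration.integrable_bound[of nu "\<lambda>p. M\<^sup>2 * (cmod (f p))\<^sup>2"])
      (use f g M in \<open>auto simp: L2_iff norm_mult power_mult_distrib intro!: mult_right_mono power_mono\<close>)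
qed

lemma L2_cmult: "f \<in> L2 \<Longrightarrow> (\<lambda>p. c * f p) \<in> L2"
  using L2_mult_bounded[of f "\<lambda>_. c" "cmod c"] by simp

lemma power2_norm_add_le:
  fixes a b :: "'a::real_normed_vector"
  shows "(norm (a + b))\<^sup>2 \<le> 2 * (norm a)\<^sup>2 + 2 * (norm b)\<^sup>2"
proof -
  have "(norm (a + b))\<^sup>2 \<le> (norm a + norm b)\<^sup>2"
    by (intro power_mono norm_triangle_ineq) simp
  also have "\<dots> \<le> 2 * (norm a)\<^sup>2 + 2 * (norm b)\<^sup>2"
    using sum_squares_bound[of "norm a" "norm b"] by (simp add: power2_sum)
  finally show ?thesis .
qed

lemma L2_add:
  assumes f: "f \<in> L2" and g: "g \<in> L2"
  shows "(\<lambda>p. f p + g p) \<in> L2"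
  unfolding L2_iff
proof
  show "(\<lambda>p. f p + g p) \<in> borel_measurable borel"
    using f g by simp
  show "integrable nu (\<lambda>p. (cmod (f p + g p))\<^sup>2)"
    by (rule Bochner_Integration.integrable_bound[of nu "\<lambda>p. 2 * (cmod (f p))\<^sup>2 + 2 * (cmod (g p))\<^sup>2"])
      (use f g power2_norm_add_le in \<open>auto simp: L2_iff\<close>)
qed

lemma L2_diff: "f \<in> L2 \<Longrightarrow> g \<in> L2 \<Longrightarrow> (\<lambda>p. f p - g p) \<in> L2"
  using L2_add[of f "\<lambda>p. (-1) * g p"] L2_cmult[of g "-1"] by simp

lemma ip_add_right: "f \<in> L2 \<Longrightarrow> g \<in> L2 \<Longrightarrow> h \<in> L2 \<Longrightarrow> ip f (\<lambda>p. g p + h p) = ip f g + ip f h"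
  unfolding ip_def by (simp add: distrib_left integrable_cnj_mult_L2)

lemma ip_diff_right: "f \<in> L2 \<Longrightarrow> g \<in> L2 \<Longrightarrow> h \<in> L2 \<Longrightarrow> ip f (\<lambda>p. g p - h p) = ip f g - ip f h"
  unfolding ip_def by (simp add: right_diff_distrib integrable_cnj_mult_L2)

lemma ip_cmult_right: "ip f (\<lambda>p. c * g p) = c * ip f g"
  unfolding ip_def by (simp add: mult.left_commute)

lemma ip_cmult_left: "ip (\<lambda>p. c * f p) g = cnj c * ip f g"
  unfolding ip_def by (simp add: mult.assoc)

lemma cnj_ip: "cnj (ip f g) = ip g f"
proof -
  have "cnj (ip f g) = (CLINT p|nu. cnj (cnj (f p) * g p))"
    unfolding ip_def by (rule Bochner_Integration.integral_cnj[symmetric])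
  then show ?thesis
    unfolding ip_def by (simp add: mult.commute)
qed

lemma ip_add_left:
  assumes "f \<in> L2" "g \<in> L2" "h \<in> L2"
  shows "ip (\<lambda>p. f p + g p) h = ip f h + ip g h"
proof -
  have "ip (\<lambda>p. f p + g p) h = cnj (ip h (\<lambda>p. f p + g p))"
    by (simp only: cnj_ip)
  also have "\<dots> = cnj (ip h f + ip h g)"
    using assms by (simp only: ip_add_right)
  finally show ?thesis
    by (simp only: complex_cnj_add cnj_ip)
qed

lemma L2norm_nonneg: "L2norm f \<ge> 0"
  unfolding L2norm_def by simp

lemma power2_L2norm: "(L2norm f)\<^sup>2 = (LINT p|nu. (cmod (f p))\<^sup>2)"
  unfolding L2norm_def by (simp add: integral_nonneg_AE)

lemma ip_self: "ip f f = complex_of_real ((L2norm f)\<^sup>2)"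
proof -
  have cnj_mult_self: "cnj z * z = complex_of_real ((cmod z)\<^sup>2)" for z
    using complex_norm_square[of z] by (simp add: mult.commute)
  show ?thesis
    unfolding ip_def power2_L2norm cnj_mult_self by (rule integral_complex_of_real)
qed

lemma ip_cong_AE:
  "g \<in> borel_measurable borel \<Longrightarrow> g' \<in> borel_measurable borel \<Longrightarrow> f \<in> borel_measurable borel \<Longrightarrow>
    AE p in nu. g p = g' p \<Longrightarrow> ip f g = ip f g'"
  unfolding ip_def by (rule integral_cong_AE) auto

lemma L2norm_cong_AE:
  "g \<in> borel_measurable borel \<Longrightarrow> g' \<in> borel_measurable borel \<Longrightarrow>
    AE p in nu. g p = g' p \<Longrightarrow> L2norm g = L2norm g'"
  unfolding L2norm_def by (subst integral_cong_AE[where g="\<lambda>p. (cmod (g' p))\<^sup>2"]) auto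

lemma L2norm_cmult: "L2norm (\<lambda>p. c * f p) = cmod c * L2norm f"
  unfolding L2norm_def by (simp add: norm_mult power_mult_distrib real_sqrt_mult)

lemma power2_L2norm_add_le:
  assumes f: "f \<in> L2" and g: "g \<in> L2"
  shows "(L2norm (\<lambda>p. f p + g p))\<^sup>2 \<le> 2 * (L2norm f)\<^sup>2 + 2 * (L2norm g)\<^sup>2"
proof -
  have "(LINT p|nu. (cmod (f p + g p))\<^sup>2) \<le> (LINT p|nu. 2 * (cmod (f p))\<^sup>2 + 2 * (cmod (g p))\<^sup>2)"
    using f g L2_add[OF f g] power2_norm_add_le by (intro integral_mono) (auto simp: L2_iff)
  also have "\<dots> = 2 * (LINT p|nu. (cmod (f p))\<^sup>2) + 2 * (LINT p|nu. (cmod (g p))\<^sup>2)"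
    using f g by (simp add: L2_iff)
  finally show ?thesis unfolding power2_L2norm .
qed

lemma AE_zero_if_L2norm_zero:
  assumes f: "f \<in> L2" and "L2norm f = 0"
  shows "AE p in nu. f p = 0"
proof -
  have "(LINT p|nu. (cmod (f p))\<^sup>2) = 0"
    using assms power2_L2norm[of f] by simp
  then have "AE p in nu. (cmod (f p))\<^sup>2 = 0"
    using f by (subst (asm) integral_nonneg_eq_0_iff_AE) (auto simp: L2_iff)
  then show ?thesis by eventually_elim simp
qed

text \<open>Cauchy--Schwarz in weighted AM-GM form, which needs no square roots.\<close>
lemma norm_ip_le:
  assumes f: "f \<in> L2" and g: "g \<in> L2" and t: "t > 0"
  shows "cmod (ip f g) \<le> (t * (L2norm f)\<^sup>2 + (L2norm g)\<^sup>2 / t) / 2"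
proof -
  have pointwise: "cmod (cnj a * b) \<le> (t * (cmod a)\<^sup>2 + (cmod b)\<^sup>2 / t) / 2" for a b
  proof -
    have "0 \<le> (sqrt t * cmod a - cmod b / sqrt t)\<^sup>2" by simp
    also have "\<dots> = t * (cmod a)\<^sup>2 + (cmod b)\<^sup>2 / t - 2 * (cmod a * cmod b)"
      using t by (simp add: power2_diff power_mult_distrib power_divide)
    finally show ?thesis by (simp add: norm_mult)
  qed
  have "cmod (ip f g) \<le> (LINT p|nu. cmod (cnj (f p) * g p))"
    unfolding ip_def by (rule integral_norm_bound)
  also have "\<dots> \<le> (LINT p|nu. (t * (cmod (f p))\<^sup>2 + (cmod (g p))\<^sup>2 / t) / 2)"
    using f g pointwise by (intro integral_mono integrable_norm integrable_cnj_mult_L2) (auto simp: L2_iff)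
  also have "\<dots> = (t * (L2norm f)\<^sup>2 + (L2norm g)\<^sup>2 / t) / 2"
    using f g unfolding power2_L2norm by (simp add: L2_iff)
  finally show ?thesis .
qed

section \<open>Dominated sums over countable index sets\<close>

lemma abs_summable_on_dominated:
  fixes F :: "'i \<Rightarrow> 'b::real_normed_vector"
  assumes "w summable_on A" "\<And>x. x \<in> A \<Longrightarrow> norm (F x) \<le> w x"
  shows "F abs_summable_on A"
  by (rule summable_on_comparison_test[OF assms(1)]) (simp_all add: assms(2))

lemma summable_on_dominated:
  fixes F :: "'i \<Rightarrow> 'b::banach"
  assumes "w summable_on A" "\<And>x. x \<in> A \<Longrightarrow> norm (F x) \<le> w x"
  shows "F summable_on A"
  by (rule abs_summable_summable[OF abs_summable_on_dominated[OF assms]])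

lemma norm_infsum_le_dominated:
  fixes F :: "'i \<Rightarrow> 'b::banach"
  assumes "w summable_on A" "\<And>x. x \<in> A \<Longrightarrow> norm (F x) \<le> w x"
  shows "norm (infsum F A) \<le> infsum w A"
proof -
  have abs_summable: "F abs_summable_on A"
    using assms by (rule abs_summable_on_dominated)
  then have "norm (infsum F A) \<le> infsum (\<lambda>x. norm (F x)) A"
    by (rule norm_infsum_bound)
  also have "\<dots> \<le> infsum w A"
    using abs_summable assms by (intro infsum_mono) auto
  finally show ?thesis .
qed

lemma sums_from_nat_into:
  fixes F :: "'i::countable \<Rightarrow> 'b::banach"
  assumes inf: "infinite (UNIV :: 'i set)" and F: "F summable_on UNIV"
  shows "(\<lambda>n. F (from_nat_into UNIV n)) sums infsum F UNIV"
proof -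
  have bij: "bij_betw (from_nat_into (UNIV :: 'i set)) UNIV UNIV"
    using bij_betw_from_nat_into[OF countableI_type inf] .
  have "(\<lambda>n. F (from_nat_into UNIV n)) summable_on UNIV"
    using F summable_on_reindex_bij_betw[OF bij] by blast
  then have "(\<lambda>n. F (from_nat_into UNIV n)) sums infsum (\<lambda>n. F (from_nat_into UNIV n)) UNIV"
    by (intro has_sum_imp_sums has_sum_infsum)
  then show ?thesis
    by (simp only: infsum_reindex_bij_betw[OF bij])
qed

lemma borel_measurable_infsum:
  fixes G :: "'i::countable \<Rightarrow> 'a \<Rightarrow> 'b::{banach, second_countable_topology}"
  assumes "infinite (UNIV :: 'i set)" and "\<And>x. G x \<in> borel_measurable M"
    and "\<And>p. (\<lambda>x. G x p) summable_on UNIV"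
  shows "(\<lambda>p. \<Sum>\<^sub>\<infinity>x. G x p) \<in> borel_measurable M"
proof -
  have "(\<lambda>p. \<Sum>n. G (from_nat_into UNIV n) p) \<in> borel_measurable M"
    using assms(2) by measurable
  also have "(\<lambda>p. \<Sum>n. G (from_nat_into UNIV n) p) = (\<lambda>p. \<Sum>\<^sub>\<infinity>x. G x p)"
    using sums_from_nat_into[OF assms(1) assms(3)] by (simp add: sums_iff)
  finally show ?thesis .
qed

lemma summable_from_nat_into:
  fixes F :: "'i::countable \<Rightarrow> 'b::banach"
  assumes "infinite (UNIV :: 'i set)" and "F summable_on UNIV"
  shows "summable (\<lambda>n. F (from_nat_into UNIV n))"
  using sums_from_nat_into[OF assms] by (rule sums_summable)

lemma integral_infsum:
  fixes G :: "'i::countable \<Rightarrow> 'a \<Rightarrow> 'b::{banach, second_countable_topology}"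
  assumes inf: "infinite (UNIV :: 'i set)"
    and G: "\<And>x. integrable M (G x)"
    and w: "w summable_on UNIV" and h: "integrable M h"
    and bound: "\<And>x p. norm (G x p) \<le> w x * h p"
  shows "(\<integral>p. (\<Sum>\<^sub>\<infinity>x. G x p) \<partial>M) = (\<Sum>\<^sub>\<infinity>x. \<integral>p. G x p \<partial>M)"
proof -
  define e where "e = from_nat_into (UNIV :: 'i set)"
  note dominating = summable_on_cmult_left[OF w]
  have integral_norm_le: "(\<integral>p. norm (G x p) \<partial>M) \<le> w x * (\<integral>p. h p \<partial>M)" for x
  proof -
    have "(\<integral>p. norm (G x p) \<partial>M) \<le> (\<integral>p. w x * h p \<partial>M)"
      using bound by (intro integral_mono integrable_norm integrable_mult_right G h)
    then show ?thesis by simp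
  qed
  have norm_summable: "summable (\<lambda>n. norm (G (e n) p))" for p
    unfolding e_def using bound
    by (intro summable_from_nat_into[OF inf] abs_summable_on_dominated[OF dominating]) auto
  have "summable (\<lambda>n. w (e n) * (\<integral>p. h p \<partial>M))"
    unfolding e_def by (rule summable_from_nat_into[OF inf dominating])
  then have norm_integrals: "summable (\<lambda>n. \<integral>p. norm (G (e n) p) \<partial>M)"
    by (rule summable_comparison_test[rotated]) (use integral_norm_le in auto)
  have integrals: "(\<lambda>x. \<integral>p. G x p \<partial>M) summable_on UNIV"
    by (rule summable_on_dominated[OF dominating order_trans[OF integral_norm_bound integral_norm_le]])
  have series: "(\<lambda>p. \<Sum>\<^sub>\<infinity>x. G x p) = (\<lambda>p. \<Sum>n. G (e n) p)"
    unfolding e_def using sums_from_nat_into[OF inf summable_on_dominated[OF dominating bound]]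
    by (simp add: sums_iff)
  have "(\<integral>p. (\<Sum>\<^sub>\<infinity>x. G x p) \<partial>M) = (\<Sum>n. \<integral>p. G (e n) p \<partial>M)"
    unfolding series using G norm_summable norm_integrals by (intro integral_suminf) auto
  also have "\<dots> = (\<Sum>\<^sub>\<infinity>x. \<integral>p. G x p \<partial>M)"
    unfolding e_def using sums_from_nat_into[OF inf integrals] by (simp add: sums_iff)
  finally show ?thesis .
qed

section \<open>Fourier series of summable lattice functions\<close>

lemma infinite_UNIV_int_pair: "infinite (UNIV :: (int \<times> int) set)"
  by (simp add: finite_prod)

lemma ehat_measurable [measurable]: "ehat x \<in> borel_measurable borel"
  unfolding ehat_def dotZ_def by (intro borel_measurable_continuous_onI continuous_intros)

lemma norm_ehat [simp]: "cmod (ehat x p) = 1"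
  by (simp add: ehat_def)

lemma ehat_L2: "ehat x \<in> L2"
  by (rule L2_bounded[where M=1]) auto

lemma fhat_summable:
  "(\<lambda>x. \<bar>f x\<bar>) summable_on UNIV \<Longrightarrow> (\<lambda>x. cis (dotZ q x) * complex_of_real (f x)) summable_on UNIV"
  by (erule summable_on_dominated) (simp add: norm_mult)

lemma norm_fhat_le: "(\<lambda>x. \<bar>f x\<bar>) summable_on UNIV \<Longrightarrow> cmod (fhat f q) \<le> (\<Sum>\<^sub>\<infinity>x. \<bar>f x\<bar>)"
  unfolding fhat_def by (erule norm_infsum_le_dominated) (simp add: norm_mult)

lemma fhat_measurable: "(\<lambda>x. \<bar>f x\<bar>) summable_on UNIV \<Longrightarrow> fhat f \<in> borel_measurable borel"
  unfolding fhat_def[abs_def]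
  by (intro borel_measurable_infsum infinite_UNIV_int_pair fhat_summable)
    (unfold dotZ_def, intro borel_measurable_continuous_onI continuous_intros)

lemma rot_inv_uminus: "rot_inv f \<Longrightarrow> f (- x) = f x"
  unfolding rot_inv_def by (metis minus_equation_iff prod.collapse uminus_prod_def)

lemma cnj_fhat_even:
  assumes even: "\<And>x. f (- x) = f x"
  shows "cnj (fhat f q) = fhat f q"
proof -
  have "cnj (fhat f q) = (\<Sum>\<^sub>\<infinity>x. cis (dotZ q (- x)) * complex_of_real (f (- x)))"
    unfolding fhat_def infsum_cnj[symmetric] using even by (simp add: cis_cnj dotZ_def)
  also have "\<dots> = fhat f q"
    unfolding fhat_def by (rule infsum_reindex_bij_betw[OF bij_uminus])
  finally show ?thesis .
qed

lemma summable_on_abs_if_exp_weighted: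
  assumes "\<exists>\<alpha>>0. (\<lambda>z. exp (\<alpha> * norm (real_of_int (fst z), real_of_int (snd z))) * \<bar>f z\<bar>)
             summable_on UNIV"
  shows "(\<lambda>z. \<bar>f z\<bar>) summable_on UNIV"
proof -
  obtain \<alpha> where "\<alpha> > 0"
    and weighted: "(\<lambda>z. exp (\<alpha> * norm (real_of_int (fst z), real_of_int (snd z))) * \<bar>f z\<bar>) summable_on UNIV"
    using assms by blast
  have "\<bar>f z\<bar> \<le> exp (\<alpha> * norm (real_of_int (fst z), real_of_int (snd z))) * \<bar>f z\<bar>" for z
    using \<open>\<alpha> > 0\<close> by (simp add: mult_le_cancel_right1)
  then show ?thesis
    by (intro summable_on_comparison_test[OF weighted]) auto
qed

lemma dfun_L2:
  assumes s1: "(\<lambda>x. \<bar>p1 x\<bar>) summable_on UNIV" and s2: "(\<lambda>x. \<bar>p2 x\<bar>) summable_on UNIV"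
  shows "dfun p1 p2 k \<in> L2"
proof -
  have shift: "(\<lambda>p. c + p) \<in> borel_measurable borel" for c :: "real \<times> real"
    by (intro borel_measurable_continuous_onI continuous_intros)
  show ?thesis
    unfolding dfun_def[abs_def]
  proof (rule L2_bounded)
    show "(\<lambda>p. fhat p1 (k + p) + fhat p2 ((1/2) *\<^sub>R k + p)) \<in> borel_measurable borel"
      using measurable_compose[OF shift fhat_measurable[OF s1]]
        measurable_compose[OF shift fhat_measurable[OF s2]] by simp
    show "cmod (fhat p1 (k + p) + fhat p2 ((1/2) *\<^sub>R k + p))
        \<le> (\<Sum>\<^sub>\<infinity>x. \<bar>p1 x\<bar>) + (\<Sum>\<^sub>\<infinity>x. \<bar>p2 x\<bar>)" for p
      by (rule order_trans[OF norm_triangle_ineq add_mono[OF norm_fhat_le[OF s1] norm_fhat_le[OF s2]]])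
  qed
qed

section \<open>Symmetric operators on \<open>L2\<close>\<close>

text \<open>Elements of \<open>L2\<close> are functions, not classes modulo null sets, so linearity is
  required pointwise and only for arguments in \<open>L2\<close>.\<close>
definition symmetric_L2_op :: "((real \<times> real \<Rightarrow> complex) \<Rightarrow> real \<times> real \<Rightarrow> complex) \<Rightarrow> bool" where
  "symmetric_L2_op T \<longleftrightarrow>
     (\<forall>\<phi>\<in>L2. T \<phi> \<in> L2) \<and>
     (\<forall>\<phi>\<in>L2. \<forall>\<psi>\<in>L2. \<forall>c p. T (\<lambda>p. \<phi> p - c * \<psi> p) p = T \<phi> p - c * T \<psi> p) \<and>
     (\<forall>\<phi>\<in>L2. \<forall>\<psi>\<in>L2. ip \<phi> (T \<psi>) = ip (T \<phi>) \<psi>)"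

lemma symmetric_L2_opI:
  assumes "\<And>\<phi>. \<phi> \<in> L2 \<Longrightarrow> T \<phi> \<in> L2"
    and "\<And>\<phi> \<psi> c p. \<phi> \<in> L2 \<Longrightarrow> \<psi> \<in> L2 \<Longrightarrow> T (\<lambda>p. \<phi> p - c * \<psi> p) p = T \<phi> p - c * T \<psi> p"
    and "\<And>\<phi> \<psi>. \<phi> \<in> L2 \<Longrightarrow> \<psi> \<in> L2 \<Longrightarrow> ip \<phi> (T \<psi>) = ip (T \<phi>) \<psi>"
  shows "symmetric_L2_op T"
  using assms unfolding symmetric_L2_op_def by blast

lemma
  assumes "symmetric_L2_op T"
  shows symmetric_L2_op_L2: "\<phi> \<in> L2 \<Longrightarrow> T \<phi> \<in> L2"
    and symmetric_L2_op_diff: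
      "\<phi> \<in> L2 \<Longrightarrow> \<psi> \<in> L2 \<Longrightarrow> T (\<lambda>p. \<phi> p - c * \<psi> p) p = T \<phi> p - c * T \<psi> p"
    and symmetric_L2_op_ip: "\<phi> \<in> L2 \<Longrightarrow> \<psi> \<in> L2 \<Longrightarrow> ip \<phi> (T \<psi>) = ip (T \<phi>) \<psi>"
  using assms unfolding symmetric_L2_op_def by blast+

lemma symmetric_L2_op_add:
  assumes S: "symmetric_L2_op S" and T: "symmetric_L2_op T"
  shows "symmetric_L2_op (\<lambda>\<phi> p. S \<phi> p + T \<phi> p)"
proof (rule symmetric_L2_opI)
  note L2 = symmetric_L2_op_L2[OF S] symmetric_L2_op_L2[OF T]
  fix \<phi> \<psi> c p assume \<phi>: "\<phi> \<in> L2" and \<psi>: "\<psi> \<in> L2"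
  show "(\<lambda>p. S \<phi> p + T \<phi> p) \<in> L2"
    using \<phi> by (intro L2_add L2)
  show "S (\<lambda>p. \<phi> p - c * \<psi> p) p + T (\<lambda>p. \<phi> p - c * \<psi> p) p = S \<phi> p + T \<phi> p - c * (S \<psi> p + T \<psi> p)"
    using \<phi> \<psi> by (simp add: symmetric_L2_op_diff[OF S] symmetric_L2_op_diff[OF T] algebra_simps)
  show "ip \<phi> (\<lambda>p. S \<psi> p + T \<psi> p) = ip (\<lambda>p. S \<phi> p + T \<phi> p) \<psi>"
    using \<phi> \<psi> by (simp add: ip_add_right ip_add_left L2 symmetric_L2_op_ip[OF S] symmetric_L2_op_ip[OF T])
qed

lemma symmetric_L2_op_scaleR:
  assumes T: "symmetric_L2_op T"
  shows "symmetric_L2_op (\<lambda>\<phi> p. complex_of_real a * T \<phi> p)"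
proof (rule symmetric_L2_opI)
  fix \<phi> \<psi> c p assume \<phi>: "\<phi> \<in> L2" and \<psi>: "\<psi> \<in> L2"
  show "(\<lambda>p. complex_of_real a * T \<phi> p) \<in> L2"
    using \<phi> by (intro L2_cmult symmetric_L2_op_L2[OF T])
  show "complex_of_real a * T (\<lambda>p. \<phi> p - c * \<psi> p) p
      = complex_of_real a * T \<phi> p - c * (complex_of_real a * T \<psi> p)"
    using \<phi> \<psi> by (simp add: symmetric_L2_op_diff[OF T] algebra_simps)
  show "ip \<phi> (\<lambda>p. complex_of_real a * T \<psi> p) = ip (\<lambda>p. complex_of_real a * T \<phi> p) \<psi>"
    using \<phi> \<psi> by (simp add: ip_cmult_right ip_cmult_left symmetric_L2_op_ip[OF T])
qed

lemma symmetric_L2_op_mult: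
  assumes g: "g \<in> borel_measurable borel" and bounded: "\<And>p. \<bar>g p\<bar> \<le> M"
  shows "symmetric_L2_op (\<lambda>\<phi> p. complex_of_real (g p) * \<phi> p)"
proof (rule symmetric_L2_opI)
  fix \<phi> \<psi> c p assume \<phi>: "\<phi> \<in> L2" and \<psi>: "\<psi> \<in> L2"
  show "(\<lambda>p. complex_of_real (g p) * \<phi> p) \<in> L2"
    using g bounded by (intro L2_mult_bounded[OF \<phi>]) auto
  show "complex_of_real (g p) * (\<phi> p - c * \<psi> p)
      = complex_of_real (g p) * \<phi> p - c * (complex_of_real (g p) * \<psi> p)"
    by (simp add: algebra_simps)
  show "ip \<phi> (\<lambda>p. complex_of_real (g p) * \<psi> p) = ip (\<lambda>p. complex_of_real (g p) * \<phi> p) \<psi>"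
    unfolding ip_def by (simp add: mult_ac)
qed

lemma symmetric_L2_op_rank_one:
  assumes e: "e \<in> L2"
  shows "symmetric_L2_op (\<lambda>\<phi> p. ip e \<phi> * e p)"
proof (rule symmetric_L2_opI)
  fix \<phi> \<psi> c p assume \<phi>: "\<phi> \<in> L2" and \<psi>: "\<psi> \<in> L2"
  show "(\<lambda>p. ip e \<phi> * e p) \<in> L2"
    using e by (rule L2_cmult)
  show "ip e (\<lambda>p. \<phi> p - c * \<psi> p) * e p = ip e \<phi> * e p - c * (ip e \<psi> * e p)"
    using e \<phi> \<psi> by (simp add: ip_diff_right L2_cmult ip_cmult_right algebra_simps)
  show "ip \<phi> (\<lambda>p. ip e \<psi> * e p) = ip (\<lambda>p. ip e \<phi> * e p) \<psi>"
    by (simp add: ip_cmult_right ip_cmult_left cnj_ip)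
qed

definition proj_sum :: "('i \<Rightarrow> real) \<Rightarrow> ('i \<Rightarrow> real \<times> real \<Rightarrow> complex)
    \<Rightarrow> (real \<times> real \<Rightarrow> complex) \<Rightarrow> real \<times> real \<Rightarrow> complex" where
  "proj_sum u e \<phi> p = (\<Sum>\<^sub>\<infinity>x. complex_of_real (u x) * ip (e x) \<phi> * e x p)"

context
  fixes u :: "'i::countable \<Rightarrow> real" and e :: "'i \<Rightarrow> real \<times> real \<Rightarrow> complex"
  assumes infinite_index: "infinite (UNIV :: 'i set)"
    and u_summable: "(\<lambda>x. \<bar>u x\<bar>) summable_on UNIV"
    and e_measurable [measurable]: "\<And>x. e x \<in> borel_measurable borel"
    and norm_e_le: "\<And>x p. cmod (e x p) \<le> 1"
begin

lemma family_L2: "e x \<in> L2"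
  using norm_e_le by (intro L2_bounded) auto

lemma norm_proj_sum_term_le:
  assumes \<phi>: "\<phi> \<in> L2"
  shows "cmod (complex_of_real (u x) * ip (e x) \<phi> * e x p) \<le> \<bar>u x\<bar> * (\<integral>q. cmod (\<phi> q) \<partial>nu)"
proof -
  have "cmod (ip (e x) \<phi>) \<le> (\<integral>q. cmod (cnj (e x q) * \<phi> q) \<partial>nu)"
    unfolding ip_def by (rule integral_norm_bound)
  also have "\<dots> \<le> (\<integral>q. cmod (\<phi> q) \<partial>nu)"
    using norm_e_le
    by (intro integral_mono integrable_norm integrable_cnj_mult_L2 L2_integrable family_L2 \<phi>)
      (auto simp: norm_mult intro: mult_left_le_one_le)
  finally have "cmod (ip (e x) \<phi>) * cmod (e x p) \<le> (\<integral>q. cmod (\<phi> q) \<partial>nu) * 1"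
    using norm_e_le by (intro mult_mono) auto
  then show ?thesis
    by (simp add: norm_mult mult.assoc mult_left_mono)
qed

lemma proj_sum_summable: "\<phi> \<in> L2 \<Longrightarrow> (\<lambda>x. complex_of_real (u x) * ip (e x) \<phi> * e x p) summable_on UNIV"
  by (rule summable_on_dominated[OF summable_on_cmult_left[OF u_summable] norm_proj_sum_term_le])

lemma proj_sum_L2:
  assumes \<phi>: "\<phi> \<in> L2"
  shows "proj_sum u e \<phi> \<in> L2"
  unfolding proj_sum_def[abs_def]
proof (rule L2_bounded)
  show "(\<lambda>p. \<Sum>\<^sub>\<infinity>x. complex_of_real (u x) * ip (e x) \<phi> * e x p) \<in> borel_measurable borel"
    by (intro borel_measurable_infsum infinite_index proj_sum_summable \<phi>) simp
  show "cmod (\<Sum>\<^sub>\<infinity>x. complex_of_real (u x) * ip (e x) \<phi> * e x p)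
      \<le> (\<Sum>\<^sub>\<infinity>x. \<bar>u x\<bar> * (\<integral>q. cmod (\<phi> q) \<partial>nu))" for p
    by (rule norm_infsum_le_dominated[OF summable_on_cmult_left[OF u_summable] norm_proj_sum_term_le[OF \<phi>]])
qed

lemma proj_sum_diff:
  assumes \<phi>: "\<phi> \<in> L2" and \<psi>: "\<psi> \<in> L2"
  shows "proj_sum u e (\<lambda>p. \<phi> p - c * \<psi> p) p = proj_sum u e \<phi> p - c * proj_sum u e \<psi> p"
proof -
  have ip_diff: "ip (e x) (\<lambda>p. \<phi> p - c * \<psi> p) = ip (e x) \<phi> - c * ip (e x) \<psi>" for x
    using \<phi> \<psi> by (simp add: ip_diff_right family_L2 L2_cmult ip_cmult_right)
  have "proj_sum u e (\<lambda>p. \<phi> p - c * \<psi> p) p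
      = (\<Sum>\<^sub>\<infinity>x. complex_of_real (u x) * ip (e x) \<phi> * e x p
          + (- c) * (complex_of_real (u x) * ip (e x) \<psi> * e x p))"
    unfolding proj_sum_def ip_diff by (intro infsum_cong) (simp add: algebra_simps)
  also have "\<dots> = proj_sum u e \<phi> p + (- c) * proj_sum u e \<psi> p"
    unfolding proj_sum_def
    using \<phi> \<psi> by (simp only: infsum_add proj_sum_summable summable_on_cmult_right infsum_cmult_right')
  finally show ?thesis by simp
qed

lemma ip_proj_sum:
  assumes a: "a \<in> L2" and b: "b \<in> L2"
  shows "ip a (proj_sum u e b) = (\<Sum>\<^sub>\<infinity>x. complex_of_real (u x) * ip (e x) b * ip a (e x))"
proof -
  define G where "G x p = complex_of_real (u x) * ip (e x) b * (cnj (a p) * e x p)" for x p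
  have "ip a (proj_sum u e b) = (\<integral>p. (\<Sum>\<^sub>\<infinity>x. G x p) \<partial>nu)"
    unfolding ip_def proj_sum_def G_def infsum_cmult_right'[symmetric]
    by (simp add: mult_ac)
  also have "\<dots> = (\<Sum>\<^sub>\<infinity>x. \<integral>p. G x p \<partial>nu)"
  proof (rule integral_infsum[OF infinite_index])
    show "integrable nu (G x)" for x
      unfolding G_def[abs_def] by (intro integrable_mult_right integrable_cnj_mult_L2 a family_L2)
    show "(\<lambda>x. \<bar>u x\<bar> * (\<integral>q. cmod (b q) \<partial>nu)) summable_on UNIV"
      by (rule summable_on_cmult_left[OF u_summable])
    show "integrable nu (\<lambda>p. cmod (a p))"
      by (intro integrable_norm L2_integrable a)
    show "cmod (G x p) \<le> \<bar>u x\<bar> * (\<integral>q. cmod (b q) \<partial>nu) * cmod (a p)" for x p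
    proof -
      have "cmod (G x p) = cmod (a p) * cmod (complex_of_real (u x) * ip (e x) b * e x p)"
        by (simp add: G_def norm_mult)
      also have "\<dots> \<le> cmod (a p) * (\<bar>u x\<bar> * (\<integral>q. cmod (b q) \<partial>nu))"
        by (intro mult_left_mono norm_proj_sum_term_le b) simp
      finally show ?thesis by (simp add: mult_ac)
    qed
  qed
  also have "\<dots> = (\<Sum>\<^sub>\<infinity>x. complex_of_real (u x) * ip (e x) b * ip a (e x))"
    unfolding G_def ip_def by simp
  finally show ?thesis .
qed

lemma symmetric_L2_op_proj_sum: "symmetric_L2_op (proj_sum u e)"
proof (rule symmetric_L2_opI)
  fix a b assume a: "a \<in> L2" and b: "b \<in> L2"
  have "ip (proj_sum u e a) b = cnj (ip b (proj_sum u e a))"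
    by (simp only: cnj_ip)
  also have "\<dots> = (\<Sum>\<^sub>\<infinity>x. complex_of_real (u x) * ip a (e x) * ip (e x) b)"
    unfolding ip_proj_sum[OF b a] infsum_cnj[symmetric] by (simp add: cnj_ip)
  also have "\<dots> = ip a (proj_sum u e b)"
    unfolding ip_proj_sum[OF a b] by (simp add: mult_ac)
  finally show "ip a (proj_sum u e b) = ip (proj_sum u e a) b" ..
qed (simp_all add: proj_sum_L2 proj_sum_diff)

end

lemma A11_eq:
  "A11 eps U u k = (\<lambda>\<phi> p. complex_of_real (ffun eps k p) * \<phi> p + proj_sum u ehat \<phi> p
     + complex_of_real U * (ip (ehat (0, 0)) \<phi> * ehat (0, 0) p))"
  by (simp add: A11_def proj_sum_def fun_eq_iff mult.assoc)

lemma abs_ffun_le: "\<bar>ffun eps k p\<bar> \<le> 8 * \<bar>eps\<bar>"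
proof -
  have "\<bar>4 - cos2 (p + k) - cos2 p\<bar> \<le> 8"
    unfolding cos2_def using abs_cos_le_one[of "fst (p + k)"] abs_cos_le_one[of "snd (p + k)"]
      abs_cos_le_one[of "fst p"] abs_cos_le_one[of "snd p"] by linarith
  then show ?thesis
    unfolding ffun_def abs_mult by (simp add: mult.commute mult_left_mono)
qed

lemma symmetric_L2_op_A11:
  assumes "(\<lambda>x. \<bar>u x\<bar>) summable_on UNIV"
  shows "symmetric_L2_op (A11 eps U u k)"
proof -
  have "ffun eps k \<in> borel_measurable borel"
    unfolding ffun_def[abs_def] cos2_def by (intro borel_measurable_continuous_onI continuous_intros)
  then have "symmetric_L2_op (\<lambda>\<phi> p. complex_of_real (ffun eps k p) * \<phi> p)"
    using abs_ffun_le by (rule symmetric_L2_op_mult)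
  then show ?thesis
    unfolding A11_eq using assms
    by (intro symmetric_L2_op_add symmetric_L2_op_proj_sum symmetric_L2_op_scaleR
        symmetric_L2_op_rank_one infinite_UNIV_int_pair ehat_L2) auto
qed

section \<open>A symmetric operator bordered by a rank-one coupling\<close>

locale bordered_operator =
  fixes T :: "(real \<times> real \<Rightarrow> complex) \<Rightarrow> real \<times> real \<Rightarrow> complex"
    and d :: "real \<times> real \<Rightarrow> complex" and v :: complex and b :: real
  assumes symmetric: "symmetric_L2_op T" and d_L2: "d \<in> L2" and v_real: "cnj v = v"
begin

lemmas T_L2 = symmetric_L2_op_L2[OF symmetric]
  and T_diff = symmetric_L2_op_diff[OF symmetric]
  and T_ip = symmetric_L2_op_ip[OF symmetric]

lemma T_minus_L2: "\<phi> \<in> L2 \<Longrightarrow> (\<lambda>p. T \<phi> p - c * \<phi> p) \<in> L2"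
  by (intro L2_diff L2_cmult T_L2)

definition bordered :: "(real \<times> real \<Rightarrow> complex) \<times> complex \<Rightarrow> (real \<times> real \<Rightarrow> complex) \<times> complex" where
  "bordered w = ((\<lambda>p. T (fst w) p + v * snd w * d p), v * ip d (fst w) + complex_of_real b * snd w)"

definition resolvent_reals :: "real set" where
  "resolvent_reals = {t. in_resolvent T (complex_of_real t)}"

definition res_sol :: "real \<Rightarrow> real \<times> real \<Rightarrow> complex" where
  "res_sol t = (SOME \<phi>. \<phi> \<in> L2 \<and> (AE p in nu. T \<phi> p - complex_of_real t * \<phi> p = - v * d p))"

definition res_bound :: "real \<Rightarrow> real" where
  "res_bound t = (SOME C. \<forall>\<phi>\<in>L2. L2norm \<phi> \<le> C * L2norm (\<lambda>p. T \<phi> p - complex_of_real t * \<phi> p))"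

text \<open>\<open>b - schur t\<close> is the Schur complement of \<open>T - t\<close> in \<open>bordered - t\<close>.\<close>
definition schur :: "real \<Rightarrow> real" where
  "schur t = t - Re (v * ip (res_sol t) d)"

lemma
  assumes t: "t \<in> resolvent_reals"
  shows res_sol_L2: "res_sol t \<in> L2"
    and res_sol_eq: "AE p in nu. T (res_sol t) p = complex_of_real t * res_sol t p - v * d p"
proof -
  have "\<exists>\<phi>\<in>L2. AE p in nu. T \<phi> p - complex_of_real t * \<phi> p = - v * d p"
    using t L2_cmult[OF d_L2, of "- v"] unfolding resolvent_reals_def in_resolvent_def by simp
  then have "res_sol t \<in> L2 \<and> (AE p in nu. T (res_sol t) p - complex_of_real t * res_sol t p = - v * d p)"
    unfolding res_sol_def by (intro someI_ex[where P="\<lambda>\<phi>. \<phi> \<in> L2 \<and> _ \<phi>"]) blast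
  then show "res_sol t \<in> L2" "AE p in nu. T (res_sol t) p = complex_of_real t * res_sol t p - v * d p"
    by (auto elim: AE_mp simp: algebra_simps)
qed

lemma L2norm_le_res_bound:
  assumes t: "t \<in> resolvent_reals" and \<phi>: "\<phi> \<in> L2"
  shows "L2norm \<phi> \<le> res_bound t * L2norm (\<lambda>p. T \<phi> p - complex_of_real t * \<phi> p)"
proof -
  have "\<exists>C. \<forall>\<phi>\<in>L2. L2norm \<phi> \<le> C * L2norm (\<lambda>p. T \<phi> p - complex_of_real t * \<phi> p)"
    using t unfolding resolvent_reals_def in_resolvent_def by blast
  then have "\<forall>\<phi>\<in>L2. L2norm \<phi> \<le> res_bound t * L2norm (\<lambda>p. T \<phi> p - complex_of_real t * \<phi> p)"
    unfolding res_bound_def by (rule someI_ex)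
  then show ?thesis using \<phi> by blast
qed

lemma AE_zero_if_AE_eigen:
  assumes t: "t \<in> resolvent_reals" and \<phi>: "\<phi> \<in> L2"
    and eigen: "AE p in nu. T \<phi> p = complex_of_real t * \<phi> p"
  shows "AE p in nu. \<phi> p = 0"
proof -
  have "AE p in nu. T \<phi> p - complex_of_real t * \<phi> p = 0"
    using eigen by eventually_elim simp
  then have "L2norm (\<lambda>p. T \<phi> p - complex_of_real t * \<phi> p) = L2norm (\<lambda>p. 0)"
    using \<phi> by (intro L2norm_cong_AE L2_measurable[OF T_minus_L2]) simp_all
  then have "L2norm \<phi> \<le> 0"
    using L2norm_le_res_bound[OF t \<phi>] by (simp add: L2norm_def)
  then show ?thesis
    using \<phi> L2norm_nonneg[of \<phi>] by (intro AE_zero_if_L2norm_zero) auto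
qed

lemma AE_eq_res_sol:
  assumes t: "t \<in> resolvent_reals" and \<phi>: "\<phi> \<in> L2"
    and eq: "AE p in nu. T \<phi> p + v * z * d p = complex_of_real t * \<phi> p"
  shows "AE p in nu. \<phi> p = z * res_sol t p"
proof -
  define w where "w p = \<phi> p - z * res_sol t p" for p
  have w: "w \<in> L2"
    unfolding w_def[abs_def] by (intro L2_diff L2_cmult \<phi> res_sol_L2 t)
  have "AE p in nu. T w p = complex_of_real t * w p"
    using eq res_sol_eq[OF t]
  proof eventually_elim
    case (elim p)
    then have T\<phi>: "T \<phi> p = complex_of_real t * \<phi> p - v * z * d p"
      by (simp add: eq_diff_eq)
    show ?case
      unfolding w_def[abs_def] T_diff[OF \<phi> res_sol_L2[OF t]] T\<phi> elim(2) by (simp add: algebra_simps)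
  qed
  then have "AE p in nu. w p = 0"
    by (rule AE_zero_if_AE_eigen[OF t w])
  then show ?thesis
    by eventually_elim (simp add: w_def)
qed

lemma schur_eq_if_eigenvalue:
  assumes t: "t \<in> resolvent_reals" and ev: "is_eigenvalue_H bordered (complex_of_real t)"
  shows "schur t = b"
proof -
  obtain \<phi> z where \<phi>: "\<phi> \<in> L2" and nontrivial: "\<not> ((AE p in nu. \<phi> p = 0) \<and> z = 0)"
    and eq1: "AE p in nu. T \<phi> p + v * z * d p = complex_of_real t * \<phi> p"
    and eq2: "v * ip d \<phi> + complex_of_real b * z = complex_of_real t * z"
    using ev unfolding is_eigenvalue_H_def bordered_def by auto
  have \<phi>_eq: "AE p in nu. \<phi> p = z * res_sol t p"
    by (rule AE_eq_res_sol[OF t \<phi> eq1])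
  have "z \<noteq> 0"
    using \<phi>_eq nontrivial by auto
  have "ip d \<phi> = ip d (\<lambda>p. z * res_sol t p)"
    using \<phi> t by (intro ip_cong_AE[OF _ _ _ \<phi>_eq] L2_measurable L2_cmult res_sol_L2 d_L2)
  with eq2 have "z * (v * ip d (res_sol t)) = z * complex_of_real (t - b)"
    by (simp add: ip_cmult_right algebra_simps)
  with \<open>z \<noteq> 0\<close> have "v * ip d (res_sol t) = complex_of_real (t - b)"
    by simp
  then have "v * ip (res_sol t) d = complex_of_real (t - b)"
    using v_real by (metis cnj_ip complex_cnj_complex_of_real complex_cnj_mult)
  then show ?thesis
    unfolding schur_def by simp
qed

lemma ip_res_sol_T:
  assumes s: "s \<in> resolvent_reals" and t: "t \<in> resolvent_reals"
  shows "ip (res_sol s) (T (res_sol t))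
    = complex_of_real t * ip (res_sol s) (res_sol t) - v * ip (res_sol s) d"
proof -
  have "ip (res_sol s) (T (res_sol t)) = ip (res_sol s) (\<lambda>p. complex_of_real t * res_sol t p - v * d p)"
    using s t by (intro ip_cong_AE res_sol_eq L2_measurable L2_diff L2_cmult T_L2 res_sol_L2 d_L2)
  then show ?thesis
    using s t by (simp add: ip_diff_right ip_cmult_right L2_cmult res_sol_L2 d_L2)
qed

lemma resolvent_identity:
  assumes s: "s \<in> resolvent_reals" and t: "t \<in> resolvent_reals"
  shows "complex_of_real (t - s) * ip (res_sol s) (res_sol t)
    = v * ip (res_sol s) d - cnj (v * ip (res_sol t) d)"
proof -
  have "ip (res_sol s) (T (res_sol t)) = cnj (ip (res_sol t) (T (res_sol s)))"
    using s t by (simp add: T_ip res_sol_L2 cnj_ip)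
  then show ?thesis
    using v_real by (simp add: ip_res_sol_T[OF s t] ip_res_sol_T[OF t s] cnj_ip algebra_simps)
qed

lemma schur_diff:
  assumes s: "s \<in> resolvent_reals" and t: "t \<in> resolvent_reals"
  shows "schur t - schur s = (t - s) * (1 + Re (ip (res_sol s) (res_sol t)))"
proof -
  have "cnj (v * ip (res_sol t) d) = v * ip (res_sol t) d"
    using resolvent_identity[OF t t] by simp
  then have "complex_of_real (t - s) * ip (res_sol s) (res_sol t) = v * ip (res_sol s) d - v * ip (res_sol t) d"
    using resolvent_identity[OF s t] by simp
  then have "Re (complex_of_real (t - s) * ip (res_sol s) (res_sol t))
      = Re (v * ip (res_sol s) d - v * ip (res_sol t) d)"
    by (rule arg_cong)
  then have "(t - s) * Re (ip (res_sol s) (res_sol t)) = Re (v * ip (res_sol s) d) - Re (v * ip (res_sol t) d)"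
    by simp
  then show ?thesis
    unfolding schur_def by (simp add: algebra_simps)
qed

text \<open>\<open>\<delta> = res_sol t - res_sol s\<close> solves \<open>(T - s) \<delta> = (t - s) res_sol t\<close>; working with squared
  norms avoids the triangle inequality in \<open>L2\<close>.\<close>
lemma power2_L2norm_res_sol_diff_le:
  assumes s: "s \<in> resolvent_reals" and t: "t \<in> resolvent_reals"
    and small: "\<bar>res_bound s * (t - s)\<bar> \<le> 1/2"
  shows "(L2norm (\<lambda>p. res_sol t p - res_sol s p))\<^sup>2
    \<le> 4 * (res_bound s * (t - s))\<^sup>2 * (L2norm (res_sol s))\<^sup>2"
proof -
  define \<delta> where "\<delta> p = res_sol t p - res_sol s p" for p
  define a where "a = (res_bound s * (t - s))\<^sup>2"
  have \<delta>: "\<delta> \<in> L2"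
    unfolding \<delta>_def[abs_def] by (intro L2_diff res_sol_L2 s t)
  have "AE p in nu. T \<delta> p - complex_of_real s * \<delta> p = complex_of_real (t - s) * res_sol t p"
    using res_sol_eq[OF s] res_sol_eq[OF t]
  proof eventually_elim
    case (elim p)
    have "T \<delta> p = T (res_sol t) p - T (res_sol s) p"
      using T_diff[OF res_sol_L2[OF t] res_sol_L2[OF s], of 1 p] by (simp add: \<delta>_def[abs_def])
    then show ?case
      unfolding elim by (simp add: \<delta>_def algebra_simps)
  qed
  then have "L2norm (\<lambda>p. T \<delta> p - complex_of_real s * \<delta> p) = L2norm (\<lambda>p. complex_of_real (t - s) * res_sol t p)"
    using t by (intro L2norm_cong_AE L2_measurable[OF T_minus_L2[OF \<delta>]] L2_measurable[OF L2_cmult]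
        res_sol_L2)
  then have "L2norm \<delta> \<le> res_bound s * (\<bar>t - s\<bar> * L2norm (res_sol t))"
    using L2norm_le_res_bound[OF s \<delta>] by (simp add: L2norm_cmult flip: of_real_diff)
  also have "\<dots> \<le> \<bar>res_bound s * (t - s)\<bar> * L2norm (res_sol t)"
    unfolding abs_mult mult.assoc by (intro mult_right_mono) (simp_all add: L2norm_nonneg)
  finally have "(L2norm \<delta>)\<^sup>2 \<le> (\<bar>res_bound s * (t - s)\<bar> * L2norm (res_sol t))\<^sup>2"
    by (rule power_mono[OF _ L2norm_nonneg])
  then have "(L2norm \<delta>)\<^sup>2 \<le> a * (L2norm (res_sol t))\<^sup>2"
    by (simp add: a_def power_mult_distrib)
  also have "\<dots> \<le> a * (2 * (L2norm (res_sol s))\<^sup>2 + 2 * (L2norm \<delta>)\<^sup>2)"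
    using power2_L2norm_add_le[OF res_sol_L2[OF s] \<delta>]
    by (intro mult_left_mono) (simp_all add: \<delta>_def a_def)
  finally have "(L2norm \<delta>)\<^sup>2 * (1 - 2 * a) \<le> 2 * a * (L2norm (res_sol s))\<^sup>2"
    by (simp add: algebra_simps)
  moreover have "a \<le> 1/4"
    using power_mono[OF small abs_ge_zero, of 2] by (simp add: a_def power2_abs power_divide)
  then have "(L2norm \<delta>)\<^sup>2 * (1/2) \<le> (L2norm \<delta>)\<^sup>2 * (1 - 2 * a)"
    by (intro mult_left_mono) simp_all
  ultimately show ?thesis
    unfolding a_def \<delta>_def by linarith
qed

lemma Re_ip_res_sol_near:
  assumes s: "s \<in> resolvent_reals" and t: "t \<in> resolvent_reals" and "t \<noteq> s"
    and small: "\<bar>res_bound s * (t - s)\<bar> \<le> 1/2"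
  shows "\<bar>Re (ip (res_sol s) (res_sol t)) - (L2norm (res_sol s))\<^sup>2\<bar>
    \<le> \<bar>t - s\<bar> * ((1 + 4 * (res_bound s)\<^sup>2) * (L2norm (res_sol s))\<^sup>2 / 2)"
proof -
  define \<delta> where "\<delta> p = res_sol t p - res_sol s p" for p
  define \<tau> where "\<tau> = \<bar>t - s\<bar>"
  have \<delta>: "\<delta> \<in> L2"
    unfolding \<delta>_def[abs_def] by (intro L2_diff res_sol_L2 s t)
  have "\<tau> > 0"
    using \<open>t \<noteq> s\<close> by (simp add: \<tau>_def)
  have "(L2norm \<delta>)\<^sup>2 \<le> 4 * (res_bound s)\<^sup>2 * \<tau>\<^sup>2 * (L2norm (res_sol s))\<^sup>2"
    using power2_L2norm_res_sol_diff_le[OF s t small]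
    by (simp add: \<delta>_def[abs_def] \<tau>_def power_mult_distrib mult_ac)
  then have \<delta>_bound: "(L2norm \<delta>)\<^sup>2 / \<tau> \<le> 4 * (res_bound s)\<^sup>2 * \<tau> * (L2norm (res_sol s))\<^sup>2"
    using \<open>\<tau> > 0\<close> by (simp add: divide_le_eq power2_eq_square mult_ac)
  have "Re (ip (res_sol s) (res_sol t)) - (L2norm (res_sol s))\<^sup>2 = Re (ip (res_sol s) \<delta>)"
    using s t by (simp add: \<delta>_def[abs_def] ip_diff_right res_sol_L2 ip_self)
  also have "\<bar>\<dots>\<bar> \<le> (\<tau> * (L2norm (res_sol s))\<^sup>2 + (L2norm \<delta>)\<^sup>2 / \<tau>) / 2"
    using abs_Re_le_cmod norm_ip_le[OF res_sol_L2[OF s] \<delta> \<open>\<tau> > 0\<close>] by (rule order_trans)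
  also have "\<dots> \<le> \<tau> * ((1 + 4 * (res_bound s)\<^sup>2) * (L2norm (res_sol s))\<^sup>2 / 2)"
    using \<delta>_bound by (simp add: algebra_simps)
  finally show ?thesis
    unfolding \<tau>_def .
qed

lemma has_field_derivative_schur:
  assumes x: "x \<in> resolvent_reals" and S: "S \<subseteq> resolvent_reals"
  shows "(schur has_field_derivative 1 + (L2norm (res_sol x))\<^sup>2) (at x within S)"
proof -
  define C where "C = res_bound x"
  define M where "M = (1 + 4 * C\<^sup>2) * (L2norm (res_sol x))\<^sup>2 / 2"
  have "\<forall>\<^sub>F y in at x within S.
      norm ((schur y - schur x) / (y - x) - (1 + (L2norm (res_sol x))\<^sup>2)) \<le> \<bar>y - x\<bar> * M"
    unfolding eventually_at
  proof (intro exI conjI ballI impI)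
    show "0 < 1 / (2 * \<bar>C\<bar> + 1)"
      by (simp add: add_pos_nonneg)
    fix y assume "y \<in> S" and near: "y \<noteq> x \<and> dist y x < 1 / (2 * \<bar>C\<bar> + 1)"
    then have y: "y \<in> resolvent_reals" "y \<noteq> x"
      using S by auto
    have "\<bar>C * (y - x)\<bar> = \<bar>C\<bar> * \<bar>y - x\<bar>"
      by (rule abs_mult)
    also have "\<dots> \<le> \<bar>C\<bar> * (1 / (2 * \<bar>C\<bar> + 1))"
      using near by (intro mult_left_mono) (auto simp: dist_real_def)
    also have "\<dots> \<le> 1/2"
      by (simp add: field_simps)
    finally show "norm ((schur y - schur x) / (y - x) - (1 + (L2norm (res_sol x))\<^sup>2)) \<le> \<bar>y - x\<bar> * M"
      using Re_ip_res_sol_near[OF x y(1) y(2)] schur_diff[OF x y(1)] y(2)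
      by (simp add: C_def M_def)
  qed
  moreover have "((\<lambda>y. \<bar>y - x\<bar> * M) \<longlongrightarrow> 0) (at x within S)"
    by (intro tendsto_eq_intros) auto
  ultimately have "((\<lambda>y. (schur y - schur x) / (y - x) - (1 + (L2norm (res_sol x))\<^sup>2)) \<longlongrightarrow> 0)
      (at x within S)"
    by (rule Lim_null_comparison)
  then show ?thesis
    unfolding has_field_derivative_iff by (simp only: Lim_null[symmetric])
qed

lemma schur_strict_mono_on_component:
  assumes C: "C \<in> components resolvent_reals" and s: "s \<in> C" and t: "t \<in> C" and "s < t"
  shows "schur s < schur t"
proof -
  have "{s..t} \<subseteq> C"
    using connected_contains_Icc[OF in_components_connected[OF C] s t] .
  then have R: "{s..t} \<subseteq> resolvent_reals"
    using in_components_subset[OF C] by blast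
  show ?thesis
  proof (rule DERIV_pos_imp_increasing_open[OF \<open>s < t\<close>])
    fix x assume x: "s < x" "x < t"
    then have "(schur has_field_derivative 1 + (L2norm (res_sol x))\<^sup>2) (at x within {s..t})"
      using R by (intro has_field_derivative_schur) auto
    then have "(schur has_field_derivative 1 + (L2norm (res_sol x))\<^sup>2) (at x)"
      by (simp only: at_within_Icc_at[OF x])
    moreover have "1 + (L2norm (res_sol x))\<^sup>2 > 0"
      by (simp add: add_pos_nonneg)
    ultimately show "\<exists>y. (schur has_real_derivative y) (at x) \<and> y > 0"
      by blast
  next
    show "continuous_on {s..t} schur"
      unfolding continuous_on_eq_continuous_within
    proof
      fix x assume "x \<in> {s..t}"
      then show "continuous (at x within {s..t}) schur"
        using R by (intro DERIV_continuous[OF has_field_derivative_schur]) auto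
    qed
  qed
qed

theorem eigenvalue_unique_in_component:
  assumes C: "C \<in> components resolvent_reals" and s: "s \<in> C" and t: "t \<in> C"
    and ev_s: "is_eigenvalue_H bordered (complex_of_real s)"
    and ev_t: "is_eigenvalue_H bordered (complex_of_real t)"
  shows "s = t"
proof -
  have "s \<in> resolvent_reals" "t \<in> resolvent_reals"
    using in_components_subset[OF C] s t by auto
  then have "schur s = schur t"
    using schur_eq_if_eigenvalue ev_s ev_t by simp
  then show ?thesis
    using schur_strict_mono_on_component[OF C s t] schur_strict_mono_on_component[OF C t s]
    by (cases s t rule: linorder_cases) auto
qed

end

theorem corollary4p7:
  fixes eps hb U :: real and u ups p1 p2 :: "int \<times> int \<Rightarrow> real" and k :: "real \<times> real"
  assumes eps: "eps \<ge> 0" and hb: "0 \<le> hb" "hb \<le> 1/2" and U: "U \<ge> 0"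
    and u_nonneg: "\<forall>x. u x \<ge> 0"
    and rot: "rot_inv u" "rot_inv ups" "rot_inv p1" "rot_inv p2"
    and u_sum: "u summable_on UNIV"
    and ups_sum: "(\<lambda>x. \<bar>ups x\<bar>) summable_on UNIV"
    and p1_exp: "\<exists>\<alpha>>0. (\<lambda>z. exp (\<alpha> * norm (real_of_int (fst z), real_of_int (snd z))) * \<bar>p1 z\<bar>)
                    summable_on UNIV"
    and p2_exp: "\<exists>\<alpha>>0. (\<lambda>z. exp (\<alpha> * norm (real_of_int (fst z), real_of_int (snd z))) * \<bar>p2 z\<bar>)
                    summable_on UNIV"
    and p2_supp: "\<forall>z. \<not> (even (fst z) \<and> even (snd z)) \<longrightarrow> p2 z = 0"
    and p_nz: "\<exists>z. p1 z + p2 z \<noteq> 0"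
    and p_gen: "\<forall>q. \<exists>x. complex_of_real (p2 x) \<noteq> - cis (dotZ q x / 2) * complex_of_real (p1 x)"
    and k: "k \<in> TT"
  shows "\<forall>C \<in> components {t::real. in_resolvent (A11 eps U u k) (complex_of_real t)}.
           \<forall>l1\<in>C. \<forall>l2\<in>C.
             is_eigenvalue_H (Aop eps hb U u ups p1 p2 k) (complex_of_real l1) \<and>
             is_eigenvalue_H (Aop eps hb U u ups p1 p2 k) (complex_of_real l2) \<longrightarrow> l1 = l2"
proof -
  have "(\<lambda>x. \<bar>u x\<bar>) = u"
    using u_nonneg by (simp add: fun_eq_iff)
  with u_sum have "(\<lambda>x. \<bar>u x\<bar>) summable_on UNIV"
    by simp
  then interpret bordered_operator "A11 eps U u k" "dfun p1 p2 k" "fhat ups k" "bfun eps hb k"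
    using dfun_L2[OF summable_on_abs_if_exp_weighted[OF p1_exp] summable_on_abs_if_exp_weighted[OF p2_exp]]
      cnj_fhat_even[of ups, OF rot_inv_uminus[OF rot(2)]]
    by unfold_locales (rule symmetric_L2_op_A11)
  have Aop_eq: "Aop eps hb U u ups p1 p2 k = bordered"
    by (simp add: Aop_def bordered_def fun_eq_iff)
  show ?thesis
    unfolding Aop_eq using eigenvalue_unique_in_component[unfolded resolvent_reals_def] by blast
qed

end
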